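(* The set of bounded elements of $\mathcal{P}_{\mathrm{fci}}(I)$ is a definable subset of the structure $\mathcal{L}(I)$.
   Context: Let $I$ be a dense linear order with left endpoint $0$ and no right endpoint. Let $\mathcal{P}_{\mathrm{fci}}(I)$ be the set of finite unions of closed intervals $[i,j]$, $[i,+\infty)$, $(-\infty,j]$ of $I$. $\mathcal{L}(I)$ is the structure with universe $\mathcal{P}_{\mathrm{fci}}(I)$ in the signature $\{\cup,\cap,\bot,c_0,\min,\max,l,r\}$, interpreted as follows. - $\cup$ and $\cap$ are union and intersection. - $\bot$ is $\emptyset$, and $c_0$ is $\{0\}$. - $\min(A)$ is the singleton of the least element of $A$, with $\min(\emptyset)=\emptyset$. - $\max(A)$ is the singleton of the greatest element when $A$ is nonempty and bounded, and $\emptyset$ otherwise. - $l(A)$ and $r(A)$ are the sets of left and right endpoints of $A$. Left endpoints are the minima of the maximal closed intervals composing $A$. Right endpoints are the maxima of the bounded ones. *)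

theory Defs
  imports Main
begin

definition closed_interval :: "'a::linorder set \<Rightarrow> bool" where
  "closed_interval C \<longleftrightarrow>
     (\<exists>i j. i \<le> j \<and> C = {i..j}) \<or> (\<exists>i. C = {i..}) \<or> (\<exists>j. C = {..j})"

definition Pfci :: "'a::linorder set set" where
  "Pfci = {A. \<exists>F. finite F \<and> (\<forall>C\<in>F. closed_interval C) \<and> A = \<Union>F}"

definition bounded_el :: "'a::linorder set \<Rightarrow> bool" where
  "bounded_el A \<longleftrightarrow> (\<exists>j. \<forall>x\<in>A. x \<le> j)"

definition minL :: "'a::linorder set \<Rightarrow> 'a set" where
  "minL A = {x\<in>A. \<forall>y\<in>A. x \<le> y}"

definition maxL :: "'a::linorder set \<Rightarrow> 'a set" where
  "maxL A = {x\<in>A. \<forall>y\<in>A. y \<le> x}"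

definition max_interval :: "'a::linorder set \<Rightarrow> 'a set \<Rightarrow> bool" where
  "max_interval A C \<longleftrightarrow> closed_interval C \<and> C \<subseteq> A \<and>
     (\<forall>D. closed_interval D \<and> D \<subseteq> A \<and> C \<subseteq> D \<longrightarrow> D = C)"

definition lL :: "'a::linorder set \<Rightarrow> 'a set" where
  "lL A = {x. \<exists>C. max_interval A C \<and> x \<in> C \<and> (\<forall>y\<in>C. x \<le> y)}"

definition rL :: "'a::linorder set \<Rightarrow> 'a set" where
  "rL A = {x. \<exists>C. max_interval A C \<and> x \<in> C \<and> (\<forall>y\<in>C. y \<le> x)}"

datatype trm = Var nat | UnT trm trm | InterT trm trm | BotT | C0T
  | MinT trm | MaxT trm | LT trm | RT trm

datatype fml = Eq trm trm | Neg fml | Conj fml fml | Ex nat fml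

fun evalT :: "'a::linorder \<Rightarrow> (nat \<Rightarrow> 'a set) \<Rightarrow> trm \<Rightarrow> 'a set" where
  "evalT z e (Var n) = e n"
| "evalT z e (UnT s t) = evalT z e s \<union> evalT z e t"
| "evalT z e (InterT s t) = evalT z e s \<inter> evalT z e t"
| "evalT z e BotT = {}"
| "evalT z e C0T = {z}"
| "evalT z e (MinT t) = minL (evalT z e t)"
| "evalT z e (MaxT t) = maxL (evalT z e t)"
| "evalT z e (LT t) = lL (evalT z e t)"
| "evalT z e (RT t) = rL (evalT z e t)"

fun sat :: "'a::linorder \<Rightarrow> (nat \<Rightarrow> 'a set) \<Rightarrow> fml \<Rightarrow> bool" where
  "sat z e (Eq s t) = (evalT z e s = evalT z e t)"
| "sat z e (Neg \<phi>) = (\<not> sat z e \<phi>)"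
| "sat z e (Conj \<phi> \<psi>) = (sat z e \<phi> \<and> sat z e \<psi>)"
| "sat z e (Ex n \<phi>) = (\<exists>A\<in>Pfci. sat z (e(n := A)) \<phi>)"

text \<open>S is (parameter-free) definable in L(I): a formula in the free variable 0 defines it.\<close>
definition definable :: "'a::linorder \<Rightarrow> 'a set set \<Rightarrow> bool" where
  "definable z S \<longleftrightarrow> (\<exists>\<phi>. \<forall>e. (\<forall>n. e n \<in> Pfci) \<longrightarrow> (sat z e \<phi> \<longleftrightarrow> e 0 \<in> S))"

end

theory Submission
  imports Defs
begin

text \<open>The formula \<open>x = \<bottom> \<or> max x \<noteq> \<bottom>\<close> defines the bounded elements: a nonempty finite union of
  closed intervals that is bounded above attains its supremum, because each of its nonempty
  intervals does.\<close>

lemma maxL_Un_nonempty: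
  assumes "maxL A \<noteq> {}" and "maxL B \<noteq> {}"
  shows "maxL (A \<union> B) \<noteq> {}"
proof -
  obtain a b where a: "a \<in> maxL A" and b: "b \<in> maxL B"
    using assms by blast
  show ?thesis
  proof (cases "a \<le> b")
    case True
    with a b have "b \<in> maxL (A \<union> B)"
      unfolding maxL_def by (auto intro: order_trans)
    then show ?thesis by blast
  next
    case False
    with a b have "a \<in> maxL (A \<union> B)"
      unfolding maxL_def by (auto intro: order_trans)
    then show ?thesis by blast
  qed
qed

lemma maxL_Union_nonempty:
  assumes "finite F" and "\<And>C. C \<in> F \<Longrightarrow> C \<noteq> {} \<Longrightarrow> maxL C \<noteq> {}" and "\<Union>F \<noteq> {}"
  shows "maxL (\<Union>F) \<noteq> {}"
  using assms
proof (induction F rule: finite_induct)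
  case empty
  then show ?case by simp
next
  case (insert C F)
  consider "C = {}" | "\<Union>F = {}" | "C \<noteq> {}" "\<Union>F \<noteq> {}"
    by blast
  then show ?case
  proof cases
    case 1
    with insert show ?thesis by simp
  next
    case 2
    then have "\<Union>(insert C F) = C"
      by (simp only: Union_insert Un_empty_right)
    with insert.prems show ?thesis
      by (metis insertI1)
  next
    case 3
    with insert have "maxL C \<noteq> {}" and "maxL (\<Union>F) \<noteq> {}"
      by simp_all
    then show ?thesis
      by (simp add: maxL_Un_nonempty)
  qed
qed

lemma maxL_closed_interval_nonempty:
  assumes "closed_interval C" and "C \<noteq> {}" and "bounded_el C"
  shows "maxL C \<noteq> {}"
proof -
  obtain j where j: "\<forall>x\<in>C. x \<le> j"
    using \<open>bounded_el C\<close> unfolding bounded_el_def by blast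
  from \<open>closed_interval C\<close> consider
      i k where "C = {i..k}" | i where "C = {i..}" | k where "C = {..k}"
    unfolding closed_interval_def by blast
  then show ?thesis
  proof cases
    case (1 i k)
    then have "k \<in> maxL C"
      using \<open>C \<noteq> {}\<close> unfolding maxL_def by auto
    then show ?thesis by blast
  next
    case (2 i)
    then have "j \<in> maxL C"
      using j unfolding maxL_def by auto
    then show ?thesis by blast
  next
    case (3 k)
    then have "k \<in> maxL C"
      unfolding maxL_def by auto
    then show ?thesis by blast
  qed
qed

lemma Pfci_bounded_el_iff:
  assumes "A \<in> Pfci"
  shows "bounded_el A \<longleftrightarrow> A = {} \<or> maxL A \<noteq> {}"
proof
  assume "A = {} \<or> maxL A \<noteq> {}"
  then show "bounded_el A"
    unfolding bounded_el_def maxL_def by auto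
next
  assume bounded: "bounded_el A"
  obtain F where "finite F" and intervals: "\<forall>C\<in>F. closed_interval C" and A: "A = \<Union>F"
    using assms unfolding Pfci_def by blast
  have "maxL C \<noteq> {}" if "C \<in> F" and "C \<noteq> {}" for C
  proof -
    have "bounded_el C"
      using bounded \<open>C \<in> F\<close> unfolding A bounded_el_def by blast
    with intervals that show ?thesis
      by (simp add: maxL_closed_interval_nonempty)
  qed
  with \<open>finite F\<close> have "maxL (\<Union>F) \<noteq> {}" if "\<Union>F \<noteq> {}"
    using maxL_Union_nonempty that by blast
  then show "A = {} \<or> maxL A \<noteq> {}"
    unfolding A by blast
qed

definition bounded_fml :: fml where
  "bounded_fml = Neg (Conj (Neg (Eq (Var 0) BotT)) (Eq (MaxT (Var 0)) BotT))"

lemma sat_bounded_fml: "sat z e bounded_fml \<longleftrightarrow> e 0 = {} \<or> maxL (e 0) \<noteq> {}"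
  unfolding bounded_fml_def by simp

theorem lemma4p3:
  fixes z :: "'a::linorder"
  assumes dense: "\<forall>x y::'a. x < y \<longrightarrow> (\<exists>w. x < w \<and> w < y)"
    and left_end: "\<forall>x. z \<le> x"
    and no_right_end: "\<forall>x::'a. \<exists>y. x < y"
  shows "definable z {A \<in> Pfci. bounded_el A}"
  unfolding definable_def
proof (intro exI allI impI)
  fix e :: "nat \<Rightarrow> 'a set"
  assume "\<forall>n. e n \<in> Pfci"
  then show "sat z e bounded_fml \<longleftrightarrow> e 0 \<in> {A \<in> Pfci. bounded_el A}"
    by (simp add: sat_bounded_fml Pfci_bounded_el_iff)
qed

end
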